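(* Let $(X,\|\cdot,\cdot\|)$ be a linear 2-normed space and let $E$ be a nonempty (sequentially) closed and bounded subset of $X$. Let $T:E\to E$ be a contraction. Then $T$ has a unique fixed point in $E$.
   Context: A linear 2-normed space is a real linear space $X$ of dimension greater than 1 with a function $\|\cdot,\cdot\|:X\times X\to\mathbb{R}$ such that: $\|x,y\|=0$ iff $x,y$ are linearly dependent; $\|x,y\|=\|y,x\|$; $\|\alpha x,y\|=|\alpha|\,\|x,y\|$; $\|x+y,z\|\le\|x,z\|+\|y,z\|$. A sequence $x_n\to x$ means $\|x_n-x,z\|\to0$ for every $z\in X$. $\overline{E}=\{x\in X:$ some sequence in $E$ converges to $x\}$, and $E$ is (sequentially) closed if $E=\overline{E}$. For $e\in E$, $E$ is $e$-bounded if there is $M>0$ with $\|x,e\|\le M$ for all $x\in E$; $E$ is bounded if it is $e$-bounded for every $e\in E$. $T:E\to E$ is a contraction if there exists $k\in(0,1)$ with $\|Tx-Ty,z\|\le k\|x-y,z\|$ for all $x,y\in E$ and all $z\in X$. *)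

theory Defs
  imports Main "HOL-Analysis.Analysis"
begin

definition lin_dep2 :: "'a::real_vector \<Rightarrow> 'a \<Rightarrow> bool" where
  "lin_dep2 x y \<longleftrightarrow> (\<exists>a b::real. (a \<noteq> 0 \<or> b \<noteq> 0) \<and> a *\<^sub>R x + b *\<^sub>R y = 0)"

text \<open>A linear 2-normed space: a real vector space of dimension greater than 1
  (i.e. containing two linearly independent vectors) with a 2-norm.\<close>
definition two_normed :: "('a::real_vector \<Rightarrow> 'a \<Rightarrow> real) \<Rightarrow> bool" where
  "two_normed N \<longleftrightarrow>
     (\<exists>x y::'a. \<not> lin_dep2 x y) \<and>
     (\<forall>x y. N x y = 0 \<longleftrightarrow> lin_dep2 x y) \<and>
     (\<forall>x y. N x y = N y x) \<and>
     (\<forall>a x y. N (a *\<^sub>R x) y = \<bar>a\<bar> * N x y) \<and>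
     (\<forall>x y z. N (x + y) z \<le> N x z + N y z)"

definition conv2 :: "('a::real_vector \<Rightarrow> 'a \<Rightarrow> real) \<Rightarrow> (nat \<Rightarrow> 'a) \<Rightarrow> 'a \<Rightarrow> bool" where
  "conv2 N s x \<longleftrightarrow> (\<forall>z. (\<lambda>n. N (s n - x) z) \<longlonglongrightarrow> 0)"

definition closure2 :: "('a::real_vector \<Rightarrow> 'a \<Rightarrow> real) \<Rightarrow> 'a set \<Rightarrow> 'a set" where
  "closure2 N E = {x. \<exists>s. (\<forall>n. s n \<in> E) \<and> conv2 N s x}"

definition closed2 :: "('a::real_vector \<Rightarrow> 'a \<Rightarrow> real) \<Rightarrow> 'a set \<Rightarrow> bool" where
  "closed2 N E \<longleftrightarrow> E = closure2 N E"

definition e_bounded2 :: "('a::real_vector \<Rightarrow> 'a \<Rightarrow> real) \<Rightarrow> 'a set \<Rightarrow> 'a \<Rightarrow> bool" where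
  "e_bounded2 N E e \<longleftrightarrow> (\<exists>M>0. \<forall>x\<in>E. N x e \<le> M)"

definition bounded2 :: "('a::real_vector \<Rightarrow> 'a \<Rightarrow> real) \<Rightarrow> 'a set \<Rightarrow> bool" where
  "bounded2 N E \<longleftrightarrow> (\<forall>e\<in>E. e_bounded2 N E e)"

definition contraction2 :: "('a::real_vector \<Rightarrow> 'a \<Rightarrow> real) \<Rightarrow> 'a set \<Rightarrow> ('a \<Rightarrow> 'a) \<Rightarrow> bool" where
  "contraction2 N E T \<longleftrightarrow> T ` E \<subseteq> E \<and>
     (\<exists>k. 0 < k \<and> k < 1 \<and> (\<forall>x\<in>E. \<forall>y\<in>E. \<forall>z. N (T x - T y) z \<le> k * N (x - y) z))"

end

theory Submission
  imports Defs
begin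

text \<open>Testing the contraction inequality against \<open>z = d\<close>, where \<open>d = T x\<^sub>0 - x\<^sub>0\<close>,
  gives \<open>\<parallel>x\<^sub>n\<^sub>+\<^sub>1 - x\<^sub>n, d\<parallel> \<le> k\<^sup>n \<parallel>d, d\<parallel> = 0\<close> for the Picard iterates \<open>x\<^sub>n = T\<^sup>n x\<^sub>0\<close>, so every
  step is a multiple \<open>c\<^sub>n d\<close>, and testing against some \<open>z\<close> with \<open>\<parallel>d, z\<parallel> \<noteq> 0\<close> shows
  \<open>\<bar>c\<^sub>n\<bar> \<le> k\<^sup>n\<close>. Hence the orbit is \<open>x\<^sub>0 + s\<^sub>n d\<close> with \<open>s\<^sub>n\<close> the partial sums of a
  convergent real series; it converges in the 2-norm to \<open>p = x\<^sub>0 + (\<Sum>c\<^sub>n) d\<close>, which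
  lies in \<open>E\<close> by closedness and is fixed since \<open>T\<close> is 2-norm continuous. Uniqueness holds
  because \<open>\<parallel>p - q, z\<parallel> \<le> k \<parallel>p - q, z\<parallel>\<close> for all \<open>z\<close> makes \<open>p - q\<close> dependent on every
  vector, and only \<open>0\<close> is, as the space has dimension at least 2.\<close>

lemma lin_dep2_refl: "lin_dep2 x x"
  unfolding lin_dep2_def by (rule exI[of _ 1], rule exI[of _ "-1"]) simp

lemma lin_dep2_zero_left: "lin_dep2 0 y"
  unfolding lin_dep2_def by (rule exI[of _ 1], rule exI[of _ 0]) simp

lemma lin_dep2_scaleR_scaleR: "lin_dep2 (s *\<^sub>R d) (t *\<^sub>R d)"
proof (cases "s = 0 \<and> t = 0")
  case True
  then show ?thesis by (simp add: lin_dep2_zero_left)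
next
  case False
  then have "t \<noteq> 0 \<or> - s \<noteq> 0" by auto
  moreover have "t *\<^sub>R (s *\<^sub>R d) + (- s) *\<^sub>R (t *\<^sub>R d) = 0" by simp
  ultimately show ?thesis unfolding lin_dep2_def by blast
qed

lemma lin_dep2_imp_scaleR:
  assumes "lin_dep2 y d" "d \<noteq> 0"
  obtains c where "y = c *\<^sub>R d"
proof -
  obtain a b where ab: "a \<noteq> 0 \<or> b \<noteq> 0" "a *\<^sub>R y + b *\<^sub>R d = 0"
    using assms(1) unfolding lin_dep2_def by blast
  show ?thesis
  proof (cases "a = 0")
    case True
    then show ?thesis using ab assms(2) by simp
  next
    case False
    have "a *\<^sub>R y = (- b) *\<^sub>R d"
      using ab(2) by (simp add: add_eq_0_iff2)
    then have "y = (- b / a) *\<^sub>R d"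
      using False by (metis divide_inverse_commute scaleR_scaleR scaleR_one left_inverse)
    then show ?thesis by (rule that)
  qed
qed

context
  fixes N :: "'a::real_vector \<Rightarrow> 'a \<Rightarrow> real"
  assumes two_normed: "two_normed N"
begin

lemma two_normed_eq_0_iff: "N x z = 0 \<longleftrightarrow> lin_dep2 x z"
  using two_normed unfolding two_normed_def by blast

lemma two_normed_commute: "N x z = N z x"
  using two_normed unfolding two_normed_def by blast

lemma two_normed_self: "N x x = 0"
  by (simp add: two_normed_eq_0_iff lin_dep2_refl)

lemma two_normed_scaleR: "N (a *\<^sub>R x) z = \<bar>a\<bar> * N x z"
  using two_normed unfolding two_normed_def by blast

lemma two_normed_triangle: "N (x + y) z \<le> N x z + N y z"
  using two_normed unfolding two_normed_def by blast

lemma two_normed_minus: "N (- x) z = N x z"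
  using two_normed_scaleR [of "-1" x z] by simp

lemma two_normed_minus_commute: "N (x - y) z = N (y - x) z"
  using two_normed_minus [of "x - y" z] by simp

lemma two_normed_nonneg: "0 \<le> N x z"
proof -
  have "N (x + - x) z \<le> N x z + N (- x) z"
    by (rule two_normed_triangle)
  moreover have "N 0 z = 0"
    by (simp add: two_normed_eq_0_iff lin_dep2_zero_left)
  ultimately show ?thesis
    by (simp add: two_normed_minus)
qed

lemma two_normed_triangle_diff: "N (x - y) z \<le> N (x - w) z + N (w - y) z"
  using two_normed_triangle [of "x - w" "w - y" z] by simp

lemma two_normed_ex_nonzero:
  assumes "d \<noteq> 0"
  shows "\<exists>z. N d z \<noteq> 0"
proof (rule ccontr)
  assume "\<nexists>z. N d z \<noteq> 0"
  then have "N z d = 0" for z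
    by (simp add: two_normed_commute [of z d])
  then have "lin_dep2 z d" for z
    by (simp add: two_normed_eq_0_iff [symmetric])
  then have "\<exists>c. z = c *\<^sub>R d" for z
    using lin_dep2_imp_scaleR [OF _ assms] by blast
  then have "lin_dep2 x y" for x y :: 'a
    by (metis lin_dep2_scaleR_scaleR)
  then show False
    using two_normed unfolding two_normed_def by blast
qed

lemma two_normed_eq_0I: "(\<And>z. N x z = 0) \<Longrightarrow> x = 0"
  using two_normed_ex_nonzero [of x] by blast

lemma conv2_line:
  assumes "s \<longlonglongrightarrow> C"
  shows "conv2 N (\<lambda>n. x + s n *\<^sub>R d) (x + C *\<^sub>R d)"
  unfolding conv2_def
proof
  fix z
  have "(\<lambda>n. \<bar>s n - C\<bar> * N d z) \<longlonglongrightarrow> \<bar>C - C\<bar> * N d z"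
    by (intro tendsto_intros assms)
  moreover have "N (x + s n *\<^sub>R d - (x + C *\<^sub>R d)) z = \<bar>s n - C\<bar> * N d z" for n
    using two_normed_scaleR [of "s n - C" d z] by (simp add: algebra_simps)
  ultimately show "(\<lambda>n. N (x + s n *\<^sub>R d - (x + C *\<^sub>R d)) z) \<longlonglongrightarrow> 0"
    by simp
qed

end

locale two_normed_contraction =
  fixes N :: "'a::real_vector \<Rightarrow> 'a \<Rightarrow> real" and E :: "'a set" and T :: "'a \<Rightarrow> 'a"
    and k :: real
  assumes two_normed: "two_normed N"
    and maps_into: "T ` E \<subseteq> E"
    and k_nonneg: "0 \<le> k" and k_less_1: "k < 1"
    and contracts: "x \<in> E \<Longrightarrow> y \<in> E \<Longrightarrow> N (T x - T y) z \<le> k * N (x - y) z"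
begin

lemma fixed_point_unique:
  assumes "p \<in> E" "q \<in> E" "T p = p" "T q = q"
  shows "p = q"
proof -
  have "N (p - q) z = 0" for z
  proof -
    have "N (p - q) z \<le> k * N (p - q) z"
      using contracts [OF assms(1,2)] assms(3,4) by simp
    then have "(1 - k) * N (p - q) z \<le> 0"
      by (simp add: algebra_simps)
    then show ?thesis
      using two_normed_nonneg [OF two_normed, of "p - q" z] k_less_1
      by (simp add: mult_le_0_iff)
  qed
  then show ?thesis
    using two_normed_eq_0I [OF two_normed] by fastforce
qed

lemma iterate_in: "x \<in> E \<Longrightarrow> (T ^^ n) x \<in> E"
  by (induction n) (use maps_into in auto)

lemma iterate_step_bound:
  assumes "x \<in> E"
  shows "N ((T ^^ Suc n) x - (T ^^ n) x) z \<le> k ^ n * N (T x - x) z"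
proof (induction n)
  case 0
  then show ?case by simp
next
  case (Suc n)
  have "N ((T ^^ Suc (Suc n)) x - (T ^^ Suc n) x) z
      \<le> k * N ((T ^^ Suc n) x - (T ^^ n) x) z"
    using contracts [OF iterate_in [OF assms, of "Suc n"] iterate_in [OF assms, of n], of z]
    by simp
  also have "\<dots> \<le> k * (k ^ n * N (T x - x) z)"
    using Suc k_nonneg by (simp add: mult_left_mono)
  finally show ?case by simp
qed

lemma iterate_step_collinear:
  assumes "x \<in> E"
  shows "lin_dep2 ((T ^^ Suc n) x - (T ^^ n) x) (T x - x)"
proof -
  have "N ((T ^^ Suc n) x - (T ^^ n) x) (T x - x) \<le> 0"
    using iterate_step_bound [OF assms, of n "T x - x"]
    by (simp add: two_normed_self [OF two_normed])
  then show ?thesis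
    using two_normed_nonneg [OF two_normed] two_normed_eq_0_iff [OF two_normed]
    by (meson order_antisym)
qed

lemma iterate_on_line:
  assumes "x \<in> E" "T x \<noteq> x"
  obtains c where "\<And>n. \<bar>c n\<bar> \<le> k ^ n"
    and "\<And>n. (T ^^ n) x = x + (\<Sum>i<n. c i) *\<^sub>R (T x - x)"
proof -
  define d where "d = T x - x"
  have "d \<noteq> 0" using assms(2) by (simp add: d_def)
  then have "\<forall>n. \<exists>c. (T ^^ Suc n) x - (T ^^ n) x = c *\<^sub>R d"
    using iterate_step_collinear [OF assms(1)] lin_dep2_imp_scaleR
    unfolding d_def by blast
  then obtain c where step: "\<And>n. (T ^^ Suc n) x - (T ^^ n) x = c n *\<^sub>R d"
    by metis
  obtain z where z: "N d z \<noteq> 0"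
    using two_normed_ex_nonzero [OF two_normed \<open>d \<noteq> 0\<close>] by blast
  have "\<bar>c n\<bar> * N d z \<le> k ^ n * N d z" for n
    using iterate_step_bound [OF assms(1), of n z] step [of n]
    by (simp add: two_normed_scaleR [OF two_normed] d_def)
  then have "\<bar>c n\<bar> \<le> k ^ n" for n
    using z two_normed_nonneg [OF two_normed, of d z] by simp
  moreover have "(T ^^ n) x = x + (\<Sum>i<n. c i) *\<^sub>R d" for n
  proof (induction n)
    case 0
    then show ?case by simp
  next
    case (Suc n)
    then show ?case
      using step [of n] by (simp add: algebra_simps)
  qed
  ultimately show ?thesis
    using that unfolding d_def by blast
qed

lemma iterates_converge:
  assumes "x \<in> E"
  obtains p where "conv2 N (\<lambda>n. (T ^^ n) x) p"
proof (cases "T x = x")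
  case True
  then have "(T ^^ n) x = x" for n
    by (induction n) simp_all
  then show ?thesis
    using that conv2_line [OF two_normed, of "\<lambda>_. 0" 0 x 0] by simp
next
  case False
  obtain c where c_bound: "\<And>n. \<bar>c n\<bar> \<le> k ^ n"
    and orbit: "\<And>n. (T ^^ n) x = x + (\<Sum>i<n. c i) *\<^sub>R (T x - x)"
    using iterate_on_line [OF assms False] by blast
  have "summable c"
    by (rule summable_comparison_test [OF _ summable_geometric [of k]])
      (use c_bound k_nonneg k_less_1 in auto)
  then have "conv2 N (\<lambda>n. (T ^^ n) x) (x + suminf c *\<^sub>R (T x - x))"
    using conv2_line [OF two_normed summable_LIMSEQ] by (simp add: orbit)
  then show ?thesis by (rule that)
qed

lemma limit_of_iterates_is_fixed:
  assumes "x \<in> E" "p \<in> E" and conv: "conv2 N (\<lambda>n. (T ^^ n) x) p"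
  shows "T p = p"
proof -
  have "N (T p - p) z = 0" for z
  proof -
    let ?x = "\<lambda>n. (T ^^ n) x"
    have bound: "N (T p - p) z \<le> k * N (?x n - p) z + N (?x (Suc n) - p) z" for n
    proof -
      have "N (T p - p) z \<le> N (T p - ?x (Suc n)) z + N (?x (Suc n) - p) z"
        by (rule two_normed_triangle_diff [OF two_normed])
      also have "N (T p - ?x (Suc n)) z \<le> k * N (?x n - p) z"
        using contracts [OF assms(2) iterate_in [OF assms(1)], of n z]
        by (simp add: two_normed_minus_commute [OF two_normed, of p])
      finally show ?thesis by simp
    qed
    have conv_z: "(\<lambda>n. N (?x n - p) z) \<longlonglongrightarrow> 0"
      using conv unfolding conv2_def by blast
    have "(\<lambda>n. k * N (?x n - p) z + N (?x (Suc n) - p) z) \<longlonglongrightarrow> k * 0 + 0"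
      by (intro tendsto_add tendsto_mult_left conv_z LIMSEQ_Suc [OF conv_z])
    then have "N (T p - p) z \<le> k * 0 + 0"
      using bound by (intro LIMSEQ_le_const) blast+
    then show ?thesis
      using two_normed_nonneg [OF two_normed, of "T p - p" z] by simp
  qed
  then show ?thesis
    using two_normed_eq_0I [OF two_normed] by fastforce
qed

lemma fixed_point_exists:
  assumes "E \<noteq> {}" "closed2 N E"
  shows "\<exists>p\<in>E. T p = p"
proof -
  obtain x where x: "x \<in> E" using assms(1) by blast
  obtain p where conv: "conv2 N (\<lambda>n. (T ^^ n) x) p"
    using iterates_converge [OF x] .
  have "p \<in> closure2 N E"
    unfolding closure2_def
    using iterate_in [OF x] conv by (intro CollectI exI [of _ "\<lambda>n. (T ^^ n) x"]) blast
  then have "p \<in> E"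
    using assms(2) unfolding closed2_def by simp
  then show ?thesis
    using limit_of_iterates_is_fixed [OF x _ conv] by blast
qed

end

theorem lemma3p10:
  fixes N :: "'a::real_vector \<Rightarrow> 'a \<Rightarrow> real" and E :: "'a set" and T :: "'a \<Rightarrow> 'a"
  assumes "two_normed N"
    and "E \<noteq> {}"
    and "closed2 N E"
    and "bounded2 N E"
    and "contraction2 N E T"
  shows "\<exists>!x. x \<in> E \<and> T x = x"
proof -
  obtain k where "T ` E \<subseteq> E" "0 < k" "k < 1"
    and "\<And>x y z. x \<in> E \<Longrightarrow> y \<in> E \<Longrightarrow> N (T x - T y) z \<le> k * N (x - y) z"
    using assms(5) unfolding contraction2_def by blast
  then interpret two_normed_contraction N E T k
    using assms(1) by unfold_locales auto
  show ?thesis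
    using fixed_point_exists [OF assms(2,3)] fixed_point_unique by blast
qed

end
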